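(* Let $X$ be an undirected graph and $f:Y\to X$ an object of $C_X$ such that $Y$ has no loops. Then for every $p>1$ and every $p$-cycle $h:c^p_U\to Y$ without backtracking, there exist an element $U\to X$ of $R^p_X$ (with distinguished cycle subgraph $c^p_U\subseteq U$) and a morphism $g:U\to Y$ of $C_X$ whose restriction to $c^p_U$ equals $h$.
   Context: An undirected graph has nodes $X(0)$, half-arcs $X(1)$, $s,t:X(1)\to X(0)$, and an involution $\iota$ with $s\circ\iota=t$; morphisms commute with $s,t,\iota$. An arc is a pair $\{u,\iota(u)\}$; a loop is an arc whose source and target coincide (including half-arcs fixed by $\iota$). For a node $x$, $X(x,* )$ is the set of arcs having $x$ as source or target. A morphism $f$ is a covering if for every node $x$ the induced map on arcs $X(x,* )\to Y(f_0(x),* )$ is bijective. $C_X$: objects are coverings $Y\to X$, morphisms are coverings $h:Y\to Z$ commuting with the maps to $X$. For $p\ge1$, $c^p_U$ has nodes $\mathbb{Z}/p\mathbb{Z}$ and half-arcs $[n]^\pm$ with $s([n]^+)=[n]$, $t([n]^+)=[n+1]$, $s([n]^-)=[n+1]$, $t([n]^-)=[n]$, $\iota([n]^+)=[n]^-$; a $p$-cycle of $Y$ is a morphism $h:c^p_U\to Y$, which has backtracking if $h_1([n+1]^+)=h_1([n]^-)$ for some $n$. $R^p_X$ is the set of objects $U\to X$ of $C_X$ such that $U$ is obtained by attaching a forest to a $p$-cycle: $U$ contains a subgraph isomorphic to $c^p_U$ and removing the arcs of this subgraph leaves a forest each of whose trees contains exactly one node of the cycle. *)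

theory Defs
  imports Main
begin

record ('v, 'a) ugraph =
  gnodes :: "'v set"
  harcs  :: "'a set"
  gsrc   :: "'a \<Rightarrow> 'v"
  gtgt   :: "'a \<Rightarrow> 'v"
  ginv   :: "'a \<Rightarrow> 'a"

definition wf_graph :: "('v, 'a) ugraph \<Rightarrow> bool" where
  "wf_graph G \<longleftrightarrow>
     (\<forall>u\<in>harcs G. gsrc G u \<in> gnodes G \<and> gtgt G u \<in> gnodes G \<and> ginv G u \<in> harcs G
        \<and> ginv G (ginv G u) = u \<and> gsrc G (ginv G u) = gtgt G u)"

definition is_morphism :: "('v, 'a) ugraph \<Rightarrow> ('w, 'b) ugraph \<Rightarrow> ('v \<Rightarrow> 'w) \<Rightarrow> ('a \<Rightarrow> 'b) \<Rightarrow> bool" where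
  "is_morphism G H f0 f1 \<longleftrightarrow>
     (\<forall>x\<in>gnodes G. f0 x \<in> gnodes H) \<and>
     (\<forall>u\<in>harcs G. f1 u \<in> harcs H \<and> gsrc H (f1 u) = f0 (gsrc G u)
        \<and> gtgt H (f1 u) = f0 (gtgt G u) \<and> ginv H (f1 u) = f1 (ginv G u))"

definition arc_of :: "('v, 'a) ugraph \<Rightarrow> 'a \<Rightarrow> 'a set" where
  "arc_of G u = {u, ginv G u}"

definition arcs_at :: "('v, 'a) ugraph \<Rightarrow> 'v \<Rightarrow> 'a set set" where
  "arcs_at G x = {arc_of G u | u. u \<in> harcs G \<and> (gsrc G u = x \<or> gtgt G u = x)}"

definition is_covering :: "('v, 'a) ugraph \<Rightarrow> ('w, 'b) ugraph \<Rightarrow> ('v \<Rightarrow> 'w) \<Rightarrow> ('a \<Rightarrow> 'b) \<Rightarrow> bool" where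
  "is_covering G H f0 f1 \<longleftrightarrow> is_morphism G H f0 f1 \<and>
     (\<forall>x\<in>gnodes G. bij_betw (\<lambda>e. f1 ` e) (arcs_at G x) (arcs_at H (f0 x)))"

text \<open>A loop: an arc whose source and target coincide (includes iota-fixed half-arcs).\<close>
definition has_loop :: "('v, 'a) ugraph \<Rightarrow> bool" where
  "has_loop G \<longleftrightarrow> (\<exists>u\<in>harcs G. gsrc G u = gtgt G u)"

text \<open>The cycle graph c^p_U: nodes Z/pZ represented by {0..<p}; the half-arc [n]^+ is (n, True),
  [n]^- is (n, False).\<close>
definition cyc :: "nat \<Rightarrow> (nat, nat \<times> bool) ugraph" where
  "cyc p = \<lparr> gnodes = {..<p}, harcs = {..<p} \<times> UNIV,
            gsrc = (\<lambda>(n, b). if b then n else Suc n mod p),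
            gtgt = (\<lambda>(n, b). if b then Suc n mod p else n),
            ginv = (\<lambda>(n, b). (n, \<not> b)) \<rparr>"

definition is_pcycle :: "('v, 'a) ugraph \<Rightarrow> nat \<Rightarrow> (nat \<Rightarrow> 'v) \<Rightarrow> (nat \<times> bool \<Rightarrow> 'a) \<Rightarrow> bool" where
  "is_pcycle G p h0 h1 \<longleftrightarrow> is_morphism (cyc p) G h0 h1"

definition has_backtracking :: "nat \<Rightarrow> (nat \<times> bool \<Rightarrow> 'a) \<Rightarrow> bool" where
  "has_backtracking p h1 \<longleftrightarrow> (\<exists>n<p. h1 (Suc n mod p, True) = h1 (n, False))"

definition is_forest :: "('v, 'a) ugraph \<Rightarrow> bool" where
  "is_forest G \<longleftrightarrow> \<not> has_loop G \<and>
     (\<forall>q\<ge>1. \<forall>h0 h1. is_pcycle G q h0 h1 \<longrightarrow> has_backtracking q h1)"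

definition del_arcs :: "('v, 'a) ugraph \<Rightarrow> 'a set \<Rightarrow> ('v, 'a) ugraph" where
  "del_arcs G K = G\<lparr> harcs := harcs G - K \<rparr>"

definition connected_in :: "('v, 'a) ugraph \<Rightarrow> 'v \<Rightarrow> 'v \<Rightarrow> bool" where
  "connected_in G = (\<lambda>x y. \<exists>u\<in>harcs G. gsrc G u = x \<and> gtgt G u = y)\<^sup>*\<^sup>*"

definition obj_C :: "('v, 'a) ugraph \<Rightarrow> ('w, 'b) ugraph \<Rightarrow> ('w \<Rightarrow> 'v) \<Rightarrow> ('b \<Rightarrow> 'a) \<Rightarrow> bool" where
  "obj_C X Y f0 f1 \<longleftrightarrow> wf_graph X \<and> wf_graph Y \<and> is_covering Y X f0 f1"

definition mor_C :: "('w, 'b) ugraph \<Rightarrow> ('w \<Rightarrow> 'v) \<Rightarrow> ('b \<Rightarrow> 'a) \<Rightarrow>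
                     ('u, 'c) ugraph \<Rightarrow> ('u \<Rightarrow> 'v) \<Rightarrow> ('c \<Rightarrow> 'a) \<Rightarrow>
                     ('u \<Rightarrow> 'w) \<Rightarrow> ('c \<Rightarrow> 'b) \<Rightarrow> bool" where
  "mor_C Y f0 f1 U \<phi>0 \<phi>1 g0 g1 \<longleftrightarrow> is_covering U Y g0 g1 \<and>
     (\<forall>x\<in>gnodes U. f0 (g0 x) = \<phi>0 x) \<and> (\<forall>u\<in>harcs U. f1 (g1 u) = \<phi>1 u)"

text \<open>Membership of (U, phi) in R^p_X, with distinguished cycle subgraph given by the
  injective morphism (k0, k1) : c^p_U -> U.\<close>
definition in_R :: "('v, 'a) ugraph \<Rightarrow> nat \<Rightarrow> ('u, 'c) ugraph \<Rightarrow> ('u \<Rightarrow> 'v) \<Rightarrow> ('c \<Rightarrow> 'a) \<Rightarrow>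
                    (nat \<Rightarrow> 'u) \<Rightarrow> (nat \<times> bool \<Rightarrow> 'c) \<Rightarrow> bool" where
  "in_R X p U \<phi>0 \<phi>1 k0 k1 \<longleftrightarrow> obj_C X U \<phi>0 \<phi>1 \<and>
     is_morphism (cyc p) U k0 k1 \<and> inj_on k0 (gnodes (cyc p)) \<and> inj_on k1 (harcs (cyc p)) \<and>
     (let F = del_arcs U (k1 ` harcs (cyc p)) in
        is_forest F \<and>
        (\<forall>x\<in>gnodes U. \<exists>!c. c \<in> k0 ` gnodes (cyc p) \<and> connected_in F x c))"

end

theory Submission
  imports Defs
begin

(*
  The witness U is the "unrolling" of Y along h: the cycle c^p_U, together with, at
  every cycle node i, the tree of all non-backtracking walks in Y that start at h0 i
  and do not leave along one of the two cycle arcs at h0 i.  A node of U is a pair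
  (i, w) with w such a walk, and g : U -> Y sends (i, w) to the end point of w.

  The proposition follows by composing g with f.
*)


text \<open>The half-arcs leaving a node.  In a loopless well-formed graph they are in
  bijection with the arcs at that node, which turns the covering condition into a
  statement about half-arcs.\<close>

definition outs :: "('v, 'a) ugraph \<Rightarrow> 'v \<Rightarrow> 'a set" where
  "outs G x = {u \<in> harcs G. gsrc G u = x}"

lemma arcs_at_eq_outs:
  assumes "wf_graph G"
  shows "arcs_at G x = arc_of G ` outs G x"
proof
  show "arc_of G ` outs G x \<subseteq> arcs_at G x"
    unfolding arcs_at_def outs_def by auto
  show "arcs_at G x \<subseteq> arc_of G ` outs G x"
  proof
    fix e assume "e \<in> arcs_at G x"
    then obtain u where u: "e = arc_of G u" "u \<in> harcs G" "gsrc G u = x \<or> gtgt G u = x"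
      unfolding arcs_at_def by auto
    show "e \<in> arc_of G ` outs G x"
    proof (cases "gsrc G u = x")
      case True
      then show ?thesis using u unfolding outs_def by auto
    next
      case False
      then have "ginv G u \<in> outs G x" "arc_of G (ginv G u) = e"
        using assms u unfolding wf_graph_def outs_def arc_of_def by auto
      then show ?thesis by (metis image_eqI)
    qed
  qed
qed

lemma inj_on_arc_of_outs:
  assumes "wf_graph G" "\<not> has_loop G"
  shows "inj_on (arc_of G) (outs G x)"
proof (rule inj_onI)
  fix u v assume u: "u \<in> outs G x" and v: "v \<in> outs G x" and e: "arc_of G u = arc_of G v"
  show "u = v"
  proof (rule ccontr)
    assume "u \<noteq> v"
    with e have "u = ginv G v" unfolding arc_of_def by (auto simp: doubleton_eq_iff)
    then have "gsrc G u = gtgt G v" using assms(1) v unfolding wf_graph_def outs_def by auto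
    then show False using u v assms(2) unfolding outs_def has_loop_def by auto
  qed
qed

lemma morphism_image_arc:
  assumes "is_morphism G H f0 f1" "u \<in> harcs G"
  shows "f1 ` arc_of G u = arc_of H (f1 u)"
  using assms unfolding is_morphism_def arc_of_def by auto

lemma covering_if_outs_bij:
  assumes G: "wf_graph G" "\<not> has_loop G" and H: "wf_graph H" "\<not> has_loop H"
    and mor: "is_morphism G H f0 f1"
    and bij: "\<And>x. x \<in> gnodes G \<Longrightarrow> bij_betw f1 (outs G x) (outs H (f0 x))"
  shows "is_covering G H f0 f1"
  unfolding is_covering_def
proof (intro conjI ballI)
  show "is_morphism G H f0 f1" by fact
  fix x assume x: "x \<in> gnodes G"
  have arc_H: "bij_betw (arc_of H) (outs H (f0 x)) (arcs_at H (f0 x))"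
    using inj_on_arc_of_outs[OF H] arcs_at_eq_outs[OF H(1)] by (simp add: bij_betw_def)
  have comp: "bij_betw (arc_of H \<circ> f1) (outs G x) (arcs_at H (f0 x))"
    using bij_betw_trans[OF bij[OF x] arc_H] .
  have arcs_G: "arcs_at G x = arc_of G ` outs G x"
    using arcs_at_eq_outs[OF G(1)] .
  have image_arc: "\<And>u. u \<in> outs G x \<Longrightarrow> f1 ` arc_of G u = arc_of H (f1 u)"
    using morphism_image_arc[OF mor] unfolding outs_def by auto
  show "bij_betw (\<lambda>e. f1 ` e) (arcs_at G x) (arcs_at H (f0 x))"
    unfolding bij_betw_def
  proof
    show "inj_on (\<lambda>e. f1 ` e) (arcs_at G x)"
    proof (rule inj_onI)
      fix e1 e2 assume "e1 \<in> arcs_at G x" "e2 \<in> arcs_at G x" "f1 ` e1 = f1 ` e2"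
      then obtain u1 u2 where "u1 \<in> outs G x" "u2 \<in> outs G x"
        "e1 = arc_of G u1" "e2 = arc_of G u2" "arc_of H (f1 u1) = arc_of H (f1 u2)"
        using arcs_G image_arc by auto
      then show "e1 = e2" using comp unfolding bij_betw_def inj_on_def by auto
    qed
    have "(\<lambda>e. f1 ` e) ` arcs_at G x = (arc_of H \<circ> f1) ` outs G x"
      unfolding arcs_G image_image using image_arc by auto
    then show "(\<lambda>e. f1 ` e) ` arcs_at G x = arcs_at H (f0 x)"
      using comp unfolding bij_betw_def by simp
  qed
qed

lemma covering_comp:
  assumes "is_covering U Y g0 g1" "is_covering Y X f0 f1"
  shows "is_covering U X (\<lambda>x. f0 (g0 x)) (\<lambda>u. f1 (g1 u))"
  unfolding is_covering_def
proof (intro conjI ballI)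
  show "is_morphism U X (\<lambda>x. f0 (g0 x)) (\<lambda>u. f1 (g1 u))"
    using assms unfolding is_covering_def is_morphism_def by auto
  fix x assume x: "x \<in> gnodes U"
  have "g0 x \<in> gnodes Y" using assms(1) x unfolding is_covering_def is_morphism_def by auto
  then have "bij_betw ((\<lambda>e. f1 ` e) \<circ> (\<lambda>e. g1 ` e)) (arcs_at U x) (arcs_at X (f0 (g0 x)))"
    using assms x unfolding is_covering_def by (blast intro: bij_betw_trans)
  moreover have "(\<lambda>e. f1 ` e) \<circ> (\<lambda>e. g1 ` e) = (\<lambda>e. (\<lambda>u. f1 (g1 u)) ` e)"
    by (auto simp: image_image)
  ultimately show "bij_betw (\<lambda>e. (\<lambda>u. f1 (g1 u)) ` e) (arcs_at U x) (arcs_at X (f0 (g0 x)))"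
    by simp
qed


lemma Suc_pred_mod: "0 < q \<Longrightarrow> m < q \<Longrightarrow> Suc ((m + q - 1) mod q) mod q = m"
proof -
  assume q: "0 < q" and m: "m < q"
  have "Suc ((m + q - 1) mod q) mod q = Suc (m + q - 1) mod q" by (simp add: mod_Suc_eq)
  also have "Suc (m + q - 1) = m + q" using q by simp
  finally show ?thesis using m by simp
qed

lemma pred_Suc_mod: "0 < q \<Longrightarrow> n < q \<Longrightarrow> (Suc n mod q + q - 1) mod q = n"
proof -
  assume q: "0 < q" and n: "n < q"
  have "(Suc n mod q + q - 1) mod q = (Suc n mod q + (q - 1)) mod q" using q by simp
  also have "\<dots> = (Suc n + (q - 1)) mod q" by (simp add: mod_add_left_eq)
  also have "Suc n + (q - 1) = n + q" using q by simp
  finally show ?thesis using n by simp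
qed

lemma Suc_mod_neq:
  assumes "1 < q"
  shows "Suc n mod q \<noteq> n"
proof (cases "Suc n \<le> q")
  case True
  then show ?thesis using assms by (cases "Suc n = q") auto
next
  case False
  have "Suc n mod q < q" using assms by simp
  then show ?thesis using False by linarith
qed

lemma parity_cases:
  fixes k :: nat
  obtains n where "k = 2 * n" | n where "k = Suc (2 * n)"
  by (metis oddE evenE Suc_eq_plus1)

lemma cycle_morphismD:
  assumes "is_morphism (cyc q) G a b" "n < q"
  shows "b (n, c) \<in> harcs G" "a n \<in> gnodes G"
    "gsrc G (b (n, True)) = a n" "gtgt G (b (n, True)) = a (Suc n mod q)"
    "gsrc G (b (n, False)) = a (Suc n mod q)" "gtgt G (b (n, False)) = a n"
    "ginv G (b (n, True)) = b (n, False)" "ginv G (b (n, False)) = b (n, True)"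
  using assms unfolding is_morphism_def cyc_def by auto

text \<open>A
  closed walk must turn around at a node of maximal height, and the uniqueness of the
  downward half-arc there forces a backtrack.\<close>

lemma forest_by_height:
  fixes ht :: "'v \<Rightarrow> nat"
  assumes step: "\<And>u. u \<in> harcs G \<Longrightarrow>
      ht (gtgt G u) = Suc (ht (gsrc G u)) \<or> ht (gsrc G u) = Suc (ht (gtgt G u))"
    and unique_down: "\<And>u v. u \<in> harcs G \<Longrightarrow> v \<in> harcs G \<Longrightarrow> gsrc G u = gsrc G v \<Longrightarrow>
      ht (gtgt G u) < ht (gsrc G u) \<Longrightarrow> ht (gtgt G v) < ht (gsrc G v) \<Longrightarrow> u = v"
  shows "is_forest G"
  unfolding is_forest_def
proof (intro conjI allI impI)
  show "\<not> has_loop G"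
    unfolding has_loop_def using step by force
next
  fix q :: nat and a b assume q: "1 \<le> q" and cycle: "is_pcycle G q a b"
  then have mor: "is_morphism (cyc q) G a b" by (simp add: is_pcycle_def)
  obtain m where m: "m < q" and top: "\<And>n. n < q \<Longrightarrow> ht (a n) \<le> ht (a m)"
  proof -
    let ?H = "(\<lambda>n. ht (a n)) ` {..<q}"
    have "Max ?H \<in> ?H" using q by (intro Max_in) (auto simp: lessThan_empty_iff)
    then obtain m where "m < q" "ht (a m) = Max ?H" by auto
    moreover have "ht (a n) \<le> Max ?H" if "n < q" for n using that by (intro Max_ge) auto
    ultimately show thesis using that by presburger
  qed
  define n where "n = (m + q - 1) mod q"
  have n: "n < q" "Suc n mod q = m" using q m Suc_pred_mod[of q m] by (auto simp: n_def)
  have Suc_m: "Suc m mod q < q" using q by simp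
  have down: "ht (gtgt G u) < ht (gsrc G u)"
    if "u \<in> harcs G" "gsrc G u = a m" "gtgt G u = a k" "k < q" for u k
    using step[OF that(1)] top[OF that(4)] that(2,3) by auto
  have "b (n, False) = b (m, True)"
  proof (rule unique_down)
    show "ht (gtgt G (b (n, False))) < ht (gsrc G (b (n, False)))"
      using cycle_morphismD[OF mor n(1)] n by (intro down[of _ n]) auto
    show "ht (gtgt G (b (m, True))) < ht (gsrc G (b (m, True)))"
      using cycle_morphismD[OF mor m] Suc_m by (intro down[of _ "Suc m mod q"]) auto
  qed (use cycle_morphismD[OF mor n(1)] cycle_morphismD[OF mor m] n(2) in auto)
  then show "has_backtracking q b"
    unfolding has_backtracking_def using n by metis
qed


locale cycle_unrolling =
  fixes Y :: "('w, 'b) ugraph" and p :: nat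
    and h0 :: "nat \<Rightarrow> 'w" and h1 :: "nat \<times> bool \<Rightarrow> 'b"
  assumes wf_Y: "wf_graph Y" and loopless_Y: "\<not> has_loop Y" and p_gt_1: "1 < p"
    and cycle: "is_morphism (cyc p) Y h0 h1" and no_backtrack: "\<not> has_backtracking p h1"
begin

definition prev :: "nat \<Rightarrow> nat" where
  "prev i = (i + p - 1) mod p"

lemma prev_less: "prev i < p"
  using p_gt_1 by (simp add: prev_def)

lemma Suc_prev: "i < p \<Longrightarrow> Suc (prev i) mod p = i"
  using Suc_pred_mod p_gt_1 by (simp add: prev_def)

lemma prev_Suc: "n < p \<Longrightarrow> prev (Suc n mod p) = n"
  using pred_Suc_mod p_gt_1 by (simp add: prev_def)

definition walk_end :: "nat \<Rightarrow> 'b list \<Rightarrow> 'w" where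
  "walk_end i w = (if w = [] then h0 i else gtgt Y (last w))"

definition extends :: "nat \<Rightarrow> 'b list \<Rightarrow> 'b \<Rightarrow> bool" where
  "extends i w u \<longleftrightarrow> u \<in> harcs Y \<and> gsrc Y u = walk_end i w \<and>
     (if w = [] then u \<noteq> h1 (i, True) \<and> u \<noteq> h1 (prev i, False) else u \<noteq> ginv Y (last w))"

definition admissible :: "nat \<Rightarrow> 'b list \<Rightarrow> bool" where
  "admissible i w \<longleftrightarrow> (\<forall>k<length w. extends i (take k w) (w ! k))"

lemma admissible_Nil [simp]: "admissible i []"
  by (simp add: admissible_def)

lemma admissible_snoc [simp]: "admissible i (w @ [u]) \<longleftrightarrow> admissible i w \<and> extends i w u"
  unfolding admissible_def by (auto simp: nth_append less_Suc_eq)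

lemma admissible_butlast:
  "admissible i w \<Longrightarrow> w \<noteq> [] \<Longrightarrow> admissible i (butlast w) \<and> extends i (butlast w) (last w)"
  by (metis append_butlast_last_id admissible_snoc)

lemma cycle_arcs:
  "n < p \<Longrightarrow> h1 (n, c) \<in> harcs Y \<and> h0 n \<in> gnodes Y
     \<and> gsrc Y (h1 (n, True)) = h0 n \<and> gtgt Y (h1 (n, True)) = h0 (Suc n mod p)
     \<and> gsrc Y (h1 (n, False)) = h0 (Suc n mod p) \<and> gtgt Y (h1 (n, False)) = h0 n
     \<and> ginv Y (h1 (n, True)) = h1 (n, False) \<and> ginv Y (h1 (n, False)) = h1 (n, True)"
  using cycle_morphismD[OF cycle] by blast

lemma arcs_Y:
  "u \<in> harcs Y \<Longrightarrow> gsrc Y u \<in> gnodes Y \<and> gtgt Y u \<in> gnodes Y \<and> ginv Y u \<in> harcs Y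
     \<and> ginv Y (ginv Y u) = u \<and> gsrc Y (ginv Y u) = gtgt Y u \<and> gtgt Y (ginv Y u) = gsrc Y u"
  using wf_Y unfolding wf_graph_def by metis

lemma walk_end_node: "i < p \<Longrightarrow> admissible i w \<Longrightarrow> walk_end i w \<in> gnodes Y"
  using admissible_butlast[of i w] cycle_arcs[of i] arcs_Y
  by (auto simp: walk_end_def extends_def)

text \<open>For k < 2p the
  half-arc (k, []) is the cycle half-arc [k div 2]^+ (k even) or [k div 2]^- (k odd); for a
  nonempty admissible walk v rooted at i, the tree half-arc (2i, v) runs from (i, butlast v)
  to (i, v) and (2i+1, v) is its reverse.\<close>

definition unrolled :: "(nat \<times> 'b list, nat \<times> 'b list) ugraph" where
  "unrolled = \<lparr> gnodes = {(i, w). i < p \<and> admissible i w},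
     harcs = {(k, []) | k. k < 2 * p} \<union>
             {(k, v). k div 2 < p \<and> v \<noteq> [] \<and> admissible (k div 2) v},
     gsrc = (\<lambda>(k, v). if v = [] then (if even k then (k div 2, []) else (Suc (k div 2) mod p, []))
                      else (if even k then (k div 2, butlast v) else (k div 2, v))),
     gtgt = (\<lambda>(k, v). if v = [] then (if even k then (Suc (k div 2) mod p, []) else (k div 2, []))
                      else (if even k then (k div 2, v) else (k div 2, butlast v))),
     ginv = (\<lambda>(k, v). (if even k then Suc k else k - 1, v)) \<rparr>"

lemma unrolled_simps:
  "gnodes unrolled = {(i, w). i < p \<and> admissible i w}"
  "harcs unrolled = {(k, []) | k. k < 2 * p} \<union>
     {(k, v). k div 2 < p \<and> v \<noteq> [] \<and> admissible (k div 2) v}"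
  "gsrc unrolled (k, v) = (if v = [] then (if even k then (k div 2, []) else (Suc (k div 2) mod p, []))
     else (if even k then (k div 2, butlast v) else (k div 2, v)))"
  "gtgt unrolled (k, v) = (if v = [] then (if even k then (Suc (k div 2) mod p, []) else (k div 2, []))
     else (if even k then (k div 2, v) else (k div 2, butlast v)))"
  "ginv unrolled (k, v) = (if even k then Suc k else k - 1, v)"
  by (simp_all add: unrolled_def)

text \<open>U is a well-formed loopless graph, and g is a covering: at (i, w) the half-arcs of U
  correspond exactly to the half-arcs of Y leaving the end of w.\<close>

lemma wf_unrolled: "wf_graph unrolled"
  unfolding wf_graph_def
proof
  fix a assume a: "a \<in> harcs unrolled"
  obtain k v where kv: "a = (k, v)" by (cases a)
  show "gsrc unrolled a \<in> gnodes unrolled \<and> gtgt unrolled a \<in> gnodes unrolled \<and>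
        ginv unrolled a \<in> harcs unrolled \<and> ginv unrolled (ginv unrolled a) = a \<and>
        gsrc unrolled (ginv unrolled a) = gtgt unrolled a"
    using a kv p_gt_1 admissible_butlast[of "k div 2" v]
    by (cases k rule: parity_cases; cases "v = []") (auto simp: unrolled_simps)
qed

lemma loopless_unrolled: "\<not> has_loop unrolled"
proof
  assume "has_loop unrolled"
  then obtain k v where a: "(k, v) \<in> harcs unrolled" "gsrc unrolled (k, v) = gtgt unrolled (k, v)"
    unfolding has_loop_def by auto
  have "butlast v \<noteq> v" if "v \<noteq> []"
    using that by (metis length_butlast diff_less length_greater_0_conv zero_less_one less_irrefl)
  then show False
    using a Suc_mod_neq[OF p_gt_1, of "k div 2"]
    by (cases "v = []") (auto simp: unrolled_simps split: if_splits)
qed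

definition proj0 :: "nat \<times> 'b list \<Rightarrow> 'w" where
  "proj0 = (\<lambda>(i, w). walk_end i w)"

definition proj1 :: "nat \<times> 'b list \<Rightarrow> 'b" where
  "proj1 = (\<lambda>(k, v). if v = [] then h1 (k div 2, even k)
                     else (if even k then last v else ginv Y (last v)))"

definition emb0 :: "nat \<Rightarrow> nat \<times> 'b list" where
  "emb0 n = (n, [])"

definition emb1 :: "nat \<times> bool \<Rightarrow> nat \<times> 'b list" where
  "emb1 = (\<lambda>(n, b). (if b then 2 * n else Suc (2 * n), []))"

lemma morphism_proj: "is_morphism unrolled Y proj0 proj1"
  unfolding is_morphism_def
proof (intro conjI ballI)
  show "proj0 x \<in> gnodes Y" if "x \<in> gnodes unrolled" for x
    using that walk_end_node by (auto simp: unrolled_simps proj0_def)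
  fix a assume a: "a \<in> harcs unrolled"
  obtain k v where kv: "a = (k, v)" by (cases a)
  have "proj1 a \<in> harcs Y \<and> gsrc Y (proj1 a) = proj0 (gsrc unrolled a) \<and>
        gtgt Y (proj1 a) = proj0 (gtgt unrolled a) \<and> ginv Y (proj1 a) = proj1 (ginv unrolled a)"
  proof (cases "v = []")
    case True
    then show ?thesis using a kv cycle_arcs
      by (cases k rule: parity_cases) (auto simp: unrolled_simps proj0_def proj1_def walk_end_def)
  next
    case False
    then have "extends (k div 2) (butlast v) (last v)"
      using a kv admissible_butlast by (auto simp: unrolled_simps)
    then have "last v \<in> harcs Y" "gsrc Y (last v) = walk_end (k div 2) (butlast v)"
      by (auto simp: extends_def)
    then show ?thesis using kv False arcs_Y[of "last v"]
      by (cases k rule: parity_cases) (auto simp: unrolled_simps proj0_def proj1_def walk_end_def)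
  qed
  then show "proj1 a \<in> harcs Y" "gsrc Y (proj1 a) = proj0 (gsrc unrolled a)"
    "gtgt Y (proj1 a) = proj0 (gtgt unrolled a)" "ginv Y (proj1 a) = proj1 (ginv unrolled a)"
    by auto
qed

lemma outs_unrolled_cases:
  assumes "a \<in> outs unrolled (i, w)"
  shows "(w = [] \<and> a = (2 * i, [])) \<or> (w = [] \<and> a = (Suc (2 * prev i), [])) \<or>
         (w \<noteq> [] \<and> a = (Suc (2 * i), w)) \<or> (\<exists>u. a = (2 * i, w @ [u]) \<and> extends i w u)"
proof -
  obtain k v where kv: "a = (k, v)" by (cases a)
  have a: "(k, v) \<in> harcs unrolled" "gsrc unrolled (k, v) = (i, w)"
    using assms kv by (auto simp: outs_def)
  show ?thesis
  proof (cases k rule: parity_cases)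
    case (1 n)
    show ?thesis
    proof (cases "v = []")
      case False
      then have "n = i" "butlast v = w" "admissible n v" using a 1 by (auto simp: unrolled_simps)
      then have "v = w @ [last v]" "extends i w (last v)" using False admissible_butlast by auto
      then show ?thesis using 1 kv \<open>n = i\<close> by metis
    qed (use a 1 kv in \<open>auto simp: unrolled_simps\<close>)
  next
    case (2 n)
    show ?thesis
    proof (cases "v = []")
      case True
      then have "n < p" "Suc n mod p = i" "w = []" using a 2 by (auto simp: unrolled_simps)
      then show ?thesis using prev_Suc 2 True kv by auto
    qed (use a 2 kv in \<open>auto simp: unrolled_simps\<close>)
  qed
qed

lemma inj_on_proj1_outs:
  assumes "i < p"
  shows "inj_on proj1 (outs unrolled (i, w))"
proof (rule inj_onI)
  fix a b
  assume a: "a \<in> outs unrolled (i, w)" and b: "b \<in> outs unrolled (i, w)"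
    and eq: "proj1 a = proj1 b"
  have "h1 (i, True) \<noteq> h1 (prev i, False)"
    using no_backtrack Suc_prev[OF assms] prev_less unfolding has_backtracking_def by metis
  with outs_unrolled_cases[OF a] outs_unrolled_cases[OF b] eq show "a = b"
    by (auto simp: proj1_def extends_def)
qed

lemma outs_Y_subset_proj1_image:
  assumes "i < p" "admissible i w"
  shows "outs Y (walk_end i w) \<subseteq> proj1 ` outs unrolled (i, w)"
proof
  fix y assume "y \<in> outs Y (walk_end i w)"
  then have y: "y \<in> harcs Y" "gsrc Y y = walk_end i w" by (auto simp: outs_def)
  have extension: "(2 * i, w @ [y]) \<in> outs unrolled (i, w) \<and> proj1 (2 * i, w @ [y]) = y"
    if "extends i w y"
    using assms that by (auto simp: outs_def unrolled_simps proj1_def)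
  consider "w = []" "y = h1 (i, True)" | "w = []" "y = h1 (prev i, False)"
    | "w \<noteq> []" "y = ginv Y (last w)" | "extends i w y"
    using y unfolding extends_def by (cases "w = []") auto
  then show "y \<in> proj1 ` outs unrolled (i, w)"
  proof cases
    case 1
    then have "(2 * i, []) \<in> outs unrolled (i, w)" "proj1 (2 * i, []) = y"
      using assms by (auto simp: outs_def unrolled_simps proj1_def)
    then show ?thesis by (metis image_eqI)
  next
    case 2
    then have "(Suc (2 * prev i), []) \<in> outs unrolled (i, w)" "proj1 (Suc (2 * prev i), []) = y"
      using assms prev_less[of i] Suc_prev[OF assms(1)]
      by (auto simp: outs_def unrolled_simps proj1_def)
    then show ?thesis by (metis image_eqI)
  next
    case 3
    then have "(Suc (2 * i), w) \<in> outs unrolled (i, w)" "proj1 (Suc (2 * i), w) = y"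
      using assms by (auto simp: outs_def unrolled_simps proj1_def)
    then show ?thesis by (metis image_eqI)
  next
    case 4
    then show ?thesis using extension by (metis image_eqI)
  qed
qed

lemma covering_proj: "is_covering unrolled Y proj0 proj1"
proof (rule covering_if_outs_bij[OF wf_unrolled loopless_unrolled wf_Y loopless_Y morphism_proj])
  fix x assume x: "x \<in> gnodes unrolled"
  then obtain i w where iw: "x = (i, w)" "i < p" "admissible i w"
    by (auto simp: unrolled_simps)
  have "proj1 ` outs unrolled x \<subseteq> outs Y (proj0 x)"
    using morphism_proj unfolding is_morphism_def outs_def by force
  then have "proj1 ` outs unrolled x = outs Y (proj0 x)"
    using outs_Y_subset_proj1_image[OF iw(2,3)] iw(1) by (auto simp: proj0_def)
  then show "bij_betw proj1 (outs unrolled x) (outs Y (proj0 x))"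
    using inj_on_proj1_outs[OF iw(2)] iw(1) unfolding bij_betw_def by simp
qed

text \<open>Removing the cycle from U leaves the tree half-arcs, which form a forest: the length
  of the walk is a height function, and the only downward half-arc at (i, v) is
  (2i+1, v).\<close>

definition hanging :: "(nat \<times> 'b list, nat \<times> 'b list) ugraph" where
  "hanging = del_arcs unrolled (emb1 ` harcs (cyc p))"

lemma emb1_image: "emb1 ` harcs (cyc p) = {(k, [] :: 'b list) | k. k < 2 * p}"
proof
  show "emb1 ` harcs (cyc p) \<subseteq> {(k, []) | k. k < 2 * p}"
    by (auto simp: emb1_def cyc_def)
  show "{(k, []) | k. k < 2 * p} \<subseteq> emb1 ` harcs (cyc p)"
  proof
    fix x assume "x \<in> {(k, [] :: 'b list) | k. k < 2 * p}"
    then obtain k where x: "x = (k, [])" "k < 2 * p" by auto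
    have "x = emb1 (k div 2, even k)"
      using x(1) by (cases k rule: parity_cases) (auto simp: emb1_def)
    moreover have "(k div 2, even k) \<in> harcs (cyc p)"
      using x(2) by (simp add: cyc_def less_mult_imp_div_less mult.commute)
    ultimately show "x \<in> emb1 ` harcs (cyc p)" by blast
  qed
qed

lemma hanging_simps:
  "harcs hanging = {(k, v). k div 2 < p \<and> v \<noteq> [] \<and> admissible (k div 2) v}"
  "gsrc hanging = gsrc unrolled" "gtgt hanging = gtgt unrolled"
  by (auto simp: hanging_def del_arcs_def emb1_image unrolled_simps)

lemma forest_hanging: "is_forest hanging"
proof (rule forest_by_height[where ht = "\<lambda>x. length (snd x)"])
  fix u assume "u \<in> harcs hanging"
  then show "length (snd (gtgt hanging u)) = Suc (length (snd (gsrc hanging u))) \<or>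
             length (snd (gsrc hanging u)) = Suc (length (snd (gtgt hanging u)))"
    by (cases u; cases "fst u" rule: parity_cases) (auto simp: hanging_simps unrolled_simps)
next
  fix u v
  assume "u \<in> harcs hanging" "v \<in> harcs hanging" "gsrc hanging u = gsrc hanging v"
    "length (snd (gtgt hanging u)) < length (snd (gsrc hanging u))"
    "length (snd (gtgt hanging v)) < length (snd (gsrc hanging v))"
  then show "u = v"
    by (cases u; cases v; cases "fst u" rule: parity_cases; cases "fst v" rule: parity_cases)
       (auto simp: hanging_simps unrolled_simps)
qed

text \<open>Every node (i, w) hangs below the cycle node i: it is joined to (i, []) by
  retracing w, and the arcs of the forest never change the root index.\<close>

lemma connected_to_root: "admissible i w \<Longrightarrow> i < p \<Longrightarrow> connected_in hanging (i, w) (i, [])"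
proof (induction w rule: rev_induct)
  case Nil
  then show ?case by (simp add: connected_in_def)
next
  case (snoc u w)
  have "(Suc (2 * i), w @ [u]) \<in> harcs hanging" "gsrc hanging (Suc (2 * i), w @ [u]) = (i, w @ [u])"
    "gtgt hanging (Suc (2 * i), w @ [u]) = (i, w)"
    using snoc.prems by (auto simp: hanging_simps unrolled_simps)
  moreover have "connected_in hanging (i, w) (i, [])" using snoc by simp
  ultimately show ?case unfolding connected_in_def
    by (rule_tac converse_rtranclp_into_rtranclp) blast+
qed

lemma connected_same_root: "connected_in hanging x c \<Longrightarrow> fst c = fst x"
  unfolding connected_in_def
proof (induction rule: rtranclp_induct)
  case (step y z)
  then obtain k v where "(k, v) \<in> harcs hanging" "gsrc hanging (k, v) = y" "gtgt hanging (k, v) = z"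
    by auto
  then have "fst z = fst y" by (auto simp: hanging_simps unrolled_simps split: if_splits)
  then show ?case using step by simp
qed simp

lemma unrolled_in_R:
  assumes "obj_C X Y f0 f1"
  shows "in_R X p unrolled (\<lambda>x. f0 (proj0 x)) (\<lambda>u. f1 (proj1 u)) emb0 emb1"
  unfolding in_R_def Let_def hanging_def[symmetric]
proof (intro conjI)
  show "obj_C X unrolled (\<lambda>x. f0 (proj0 x)) (\<lambda>u. f1 (proj1 u))"
    using assms wf_unrolled covering_comp[OF covering_proj, of X f0 f1] unfolding obj_C_def by simp
  show "is_morphism (cyc p) unrolled emb0 emb1"
    unfolding is_morphism_def using p_gt_1 by (auto simp: cyc_def emb0_def emb1_def unrolled_simps)
  show "inj_on emb0 (gnodes (cyc p))"
    by (auto simp: inj_on_def emb0_def)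
  show "inj_on emb1 (harcs (cyc p))"
    by (auto simp: inj_on_def emb1_def split: if_splits; presburger)
  show "is_forest hanging"
    by (rule forest_hanging)
  show "\<forall>x\<in>gnodes unrolled. \<exists>!c. c \<in> emb0 ` gnodes (cyc p) \<and> connected_in hanging x c"
  proof
    fix x assume "x \<in> gnodes unrolled"
    then obtain i w where x: "x = (i, w)" "i < p" "admissible i w"
      by (auto simp: unrolled_simps)
    show "\<exists>!c. c \<in> emb0 ` gnodes (cyc p) \<and> connected_in hanging x c"
    proof (rule ex1I[of _ "(i, [])"])
      show "(i, []) \<in> emb0 ` gnodes (cyc p) \<and> connected_in hanging x (i, [])"
        using x connected_to_root by (auto simp: emb0_def cyc_def)
      fix c assume "c \<in> emb0 ` gnodes (cyc p) \<and> connected_in hanging x c"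
      then show "c = (i, [])" using connected_same_root[of x c] x by (auto simp: emb0_def)
    qed
  qed
qed

lemma proj_mor_C: "mor_C Y f0 f1 unrolled (\<lambda>x. f0 (proj0 x)) (\<lambda>u. f1 (proj1 u)) proj0 proj1"
  unfolding mor_C_def using covering_proj by simp

lemma proj_restricts_to_cycle:
  "(\<forall>n\<in>gnodes (cyc p). proj0 (emb0 n) = h0 n) \<and> (\<forall>a\<in>harcs (cyc p). proj1 (emb1 a) = h1 a)"
  by (auto simp: cyc_def proj0_def emb0_def walk_end_def proj1_def emb1_def)

end

theorem proposition5p3:
  fixes X :: "('v, 'a) ugraph" and Y :: "('w, 'b) ugraph"
    and f0 :: "'w \<Rightarrow> 'v" and f1 :: "'b \<Rightarrow> 'a"
    and p :: nat and h0 :: "nat \<Rightarrow> 'w" and h1 :: "nat \<times> bool \<Rightarrow> 'b"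
  assumes "obj_C X Y f0 f1"
    and "\<not> has_loop Y"
    and "p > 1"
    and "is_pcycle Y p h0 h1"
    and "\<not> has_backtracking p h1"
  shows "\<exists>(U :: (nat \<times> 'b list, nat \<times> 'b list) ugraph) \<phi>0 \<phi>1 k0 k1 g0 g1.
           in_R X p U \<phi>0 \<phi>1 k0 k1 \<and> mor_C Y f0 f1 U \<phi>0 \<phi>1 g0 g1 \<and>
           (\<forall>n\<in>gnodes (cyc p). g0 (k0 n) = h0 n) \<and>
           (\<forall>a\<in>harcs (cyc p). g1 (k1 a) = h1 a)"
proof -
  interpret cycle_unrolling Y p h0 h1
    using assms by unfold_locales (auto simp: obj_C_def is_pcycle_def)
  show ?thesis
    using unrolled_in_R[OF assms(1)] proj_mor_C proj_restricts_to_cycle by blast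
qed

end
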